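(* Let $G$ be a nonabelian finite simple group and $S$ a component of $\hat Y(G)$ whose type (genus and cell structure) occurs exactly $k$ times among the components of $\hat Y(G)$, where $k!<|G|$. Then the subquotient $\bar Q_S$ associated to $S$ (for the conjugation action of $G$) equals $G$. If moreover $S$ is non-equivar, then $G=\bar Q_S$ is the group of orientation preserving automorphisms of the cell structure of $S$.
   Context: Construction: for a finite nonabelian group $G$, $X(G)$ is the 2-dimensional simplicial complex with vertices $(g,1)$ ("type 1") and $(g,2)$ ("type 2"), $g\in G$, and oriented triangles $[(a,1),(b,1),(ab,2)]$ for $ab\ne ba$; $\hat Y(G)$ is its canonical resolution of singularities (vertices whose links are several circles are split, one vertex per circle), a disjoint union of closed connected oriented triangulated surfaces called components. Each component has a closed 2-cell structure: 0-cells the type 1 vertices, 1-cells the edges joining type 1 vertices, 2-cells the unions of triangles around a type 2 vertex. For a component $S$ containing the edge $[(x,1),(y,1)]$, $G$ acts by conjugation $(g,i)\mapsto(hgh^{-1},i)$; $G_S$ is the stabilizer of $S$, and $\bar Q_S=G_S/(C(x)\cap C(y))$ ($C(\cdot)$ = centralizer), which acts faithfully on $S$. $S$ is non-equivar if the valencies (numbers of incident 2-cells) $\lambda_1$ of $(x,1)$ and $\lambda_2$ of $(y,1)$ differ, i.e. its Schläfli symbol is $\{n,\lambda_1\text{-}\lambda_2\}$ with $\lambda_1\ne\lambda_2$. *)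

theory Defs
  imports "HOL-Algebra.Algebra"
begin

text \<open>The oriented triangle [(a,1),(b,1),(ab,2)] (with ab \<noteq> ba) is identified with the
  dart (a,b), i.e. the oriented type-1 edge from (a,1) to (b,1) it contains.
  Every edge of X(G) lies in exactly two triangles, and after resolving the singular
  vertices the connected components are exactly the classes of triangles under
  the edge-adjacency relation.\<close>

definition tri :: "('a, 'b) monoid_scheme \<Rightarrow> ('a \<times> 'a) set" where
  "tri G = {(a, b). a \<in> carrier G \<and> b \<in> carrier G \<and> a \<otimes>\<^bsub>G\<^esub> b \<noteq> b \<otimes>\<^bsub>G\<^esub> a}"

text \<open>Triangle across the edge [(a,1),(b,1)].\<close>
definition iota :: "'a \<times> 'a \<Rightarrow> 'a \<times> 'a" where
  "iota d = (snd d, fst d)"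

text \<open>Rotation around the type-1 vertex (a,1): the next triangle having (a,1) as first vertex.\<close>
definition sigma :: "('a, 'b) monoid_scheme \<Rightarrow> 'a \<times> 'a \<Rightarrow> 'a \<times> 'a" where
  "sigma G d = (fst d, fst d \<otimes>\<^bsub>G\<^esub> snd d \<otimes>\<^bsub>G\<^esub> inv\<^bsub>G\<^esub> (fst d))"

text \<open>Triangle across the edge [(b,1),(ab,2)].\<close>
definition phi :: "('a, 'b) monoid_scheme \<Rightarrow> 'a \<times> 'a \<Rightarrow> 'a \<times> 'a" where
  "phi G d = (snd d, inv\<^bsub>G\<^esub> (snd d) \<otimes>\<^bsub>G\<^esub> fst d \<otimes>\<^bsub>G\<^esub> snd d)"

text \<open>Edge adjacency of triangles: across [(a,1),(b,1)], [(b,1),(ab,2)], [(ab,2),(a,1)].\<close>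
definition adj :: "('a, 'b) monoid_scheme \<Rightarrow> (('a \<times> 'a) \<times> ('a \<times> 'a)) set" where
  "adj G = {(d, e). d \<in> tri G \<and> e \<in> tri G \<and>
             (e = iota d \<or> e = phi G d \<or> e = iota (sigma G d))}"

definition comp_of :: "('a, 'b) monoid_scheme \<Rightarrow> 'a \<times> 'a \<Rightarrow> ('a \<times> 'a) set" where
  "comp_of G d = {e. (d, e) \<in> (adj G \<union> (adj G)\<inverse>)\<^sup>*}"

definition components :: "('a, 'b) monoid_scheme \<Rightarrow> ('a \<times> 'a) set set" where
  "components G = comp_of G ` tri G"

text \<open>Isomorphism of cell structures (orientation preserving or reversing).\<close>
definition cell_iso :: "('a, 'b) monoid_scheme \<Rightarrow> ('a \<times> 'a) set \<Rightarrow> ('a \<times> 'a) set \<Rightarrow> bool" where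
  "cell_iso G S S' \<longleftrightarrow> (\<exists>\<psi>. bij_betw \<psi> S S' \<and> (\<forall>d\<in>S. \<psi> (iota d) = iota (\<psi> d)) \<and>
      ((\<forall>d\<in>S. \<psi> (sigma G d) = sigma G (\<psi> d)) \<or> (\<forall>d\<in>S. sigma G (\<psi> (sigma G d)) = \<psi> d)))"

definition aut_plus :: "('a, 'b) monoid_scheme \<Rightarrow> ('a \<times> 'a) set \<Rightarrow> ('a \<times> 'a \<Rightarrow> 'a \<times> 'a) set" where
  "aut_plus G S = {\<psi>. \<psi> \<in> extensional S \<and> bij_betw \<psi> S S \<and>
      (\<forall>d\<in>S. \<psi> (iota d) = iota (\<psi> d)) \<and> (\<forall>d\<in>S. \<psi> (sigma G d) = sigma G (\<psi> d))}"

text \<open>Valency of the type-1 vertex at the start of dart d (number of incident 2-cells).\<close>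
definition valency :: "('a, 'b) monoid_scheme \<Rightarrow> 'a \<times> 'a \<Rightarrow> nat" where
  "valency G d = card {(sigma G ^^ n) d | n. True}"

definition conj_dart :: "('a, 'b) monoid_scheme \<Rightarrow> 'a \<Rightarrow> 'a \<times> 'a \<Rightarrow> 'a \<times> 'a" where
  "conj_dart G g d = (g \<otimes>\<^bsub>G\<^esub> fst d \<otimes>\<^bsub>G\<^esub> inv\<^bsub>G\<^esub> g, g \<otimes>\<^bsub>G\<^esub> snd d \<otimes>\<^bsub>G\<^esub> inv\<^bsub>G\<^esub> g)"

definition stab :: "('a, 'b) monoid_scheme \<Rightarrow> ('a \<times> 'a) set \<Rightarrow> 'a set" where
  "stab G S = {g \<in> carrier G. conj_dart G g ` S = S}"

definition centr :: "('a, 'b) monoid_scheme \<Rightarrow> 'a \<Rightarrow> 'a set" where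
  "centr G x = {g \<in> carrier G. g \<otimes>\<^bsub>G\<^esub> x = x \<otimes>\<^bsub>G\<^esub> g}"

definition Qbar :: "('a, 'b) monoid_scheme \<Rightarrow> ('a \<times> 'a) set \<Rightarrow> 'a \<Rightarrow> 'a \<Rightarrow> 'a set monoid" where
  "Qbar G S x y = (G\<lparr>carrier := stab G S\<rparr>) Mod (centr G x \<inter> centr G y)"

end

theory Submission
  imports Defs "HOL-Combinatorics.Permutations"
begin

text \<open>Conjugation by \<open>G\<close> acts on darts compatibly with the moves \<open>iota\<close>, \<open>sigma\<close>, \<open>phi\<close>
  (the latter two are themselves conjugations), so it permutes the \<open>k\<close> components isomorphic
  to \<open>S\<close>. A simple group acting on \<open>k\<close> points with \<open>k! < |G|\<close> acts trivially: the kernel is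
  normal and \<open>G\<close> does not embed into the symmetric group. Hence \<open>G\<^sub>S = G\<close>. The group
  \<open>C(x) \<inter> C(y)\<close> is then the kernel of the action of \<open>G\<close> on the darts of \<open>S\<close>, because an
  element fixing one dart fixes everything reachable by the three moves; it is proper since
  \<open>xy \<noteq> yx\<close>, hence trivial. Finally, every dart of \<open>S\<close> is conjugate to \<open>(x,y)\<close> or \<open>(y,x)\<close>, and an
  orientation preserving automorphism preserves valencies and is determined by the image of one
  dart; if the valencies at \<open>x\<close> and \<open>y\<close> differ, it sends \<open>(x,y)\<close> to a conjugate of \<open>(x,y)\<close> and
  therefore is a conjugation.\<close>

section \<open>Small actions of simple groups\<close>

lemma card_Bij:
  assumes "finite E"
  shows "card (Bij E) = fact (card E)"
proof -
  have "bij_betw (\<lambda>p. restrict p E) {p. p permutes E} (Bij E)"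
  proof (rule bij_betwI[where g = "\<lambda>f x. if x \<in> E then f x else x"])
    show "(\<lambda>p. restrict p E) \<in> {p. p permutes E} \<rightarrow> Bij E"
      by (auto simp: Bij_def permutes_imp_bij)
    show "(\<lambda>f x. if x \<in> E then f x else x) \<in> Bij E \<rightarrow> {p. p permutes E}"
    proof
      fix f assume "f \<in> Bij E"
      then have "bij_betw (\<lambda>x. if x \<in> E then f x else x) E E"
        by (simp add: Bij_def cong: bij_betw_cong)
      then show "(\<lambda>x. if x \<in> E then f x else x) \<in> {p. p permutes E}"
        by (simp add: bij_imp_permutes)
    qed
    show "(\<lambda>x. if x \<in> E then restrict p E x else x) = p" if "p \<in> {p. p permutes E}" for p
      using that by (auto simp: permutes_def)
    show "restrict (\<lambda>x. if x \<in> E then f x else x) E = f" if "f \<in> Bij E" for f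
      using that by (auto simp: Bij_def extensional_def)
  qed
  then show ?thesis
    using card_permutations[OF refl assms] bij_betw_same_card by fastforce
qed

lemma (in group) group_actionI:
  assumes closed: "\<And>g x. g \<in> carrier G \<Longrightarrow> x \<in> E \<Longrightarrow> f g x \<in> E"
    and mult: "\<And>g h x. g \<in> carrier G \<Longrightarrow> h \<in> carrier G \<Longrightarrow> x \<in> E \<Longrightarrow> f (g \<otimes> h) x = f g (f h x)"
    and one: "\<And>x. x \<in> E \<Longrightarrow> f \<one> x = x"
  shows "group_action G E (\<lambda>g. restrict (f g) E)"
proof -
  have inv_cancel: "f (inv g) (f g x) = x" if "g \<in> carrier G" "x \<in> E" for g x
    using that mult[of "inv g" g x] one by simp
  have Bij: "restrict (f g) E \<in> Bij E" if g: "g \<in> carrier G" for g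
  proof -
    have "f g (f (inv g) x) = x" if "x \<in> E" for x
      using inv_cancel[of "inv g" x] g that by simp
    then show ?thesis
      unfolding Bij_def by (auto intro!: bij_betwI[where g = "f (inv g)"] simp: closed g inv_cancel)
  qed
  have "restrict (f (g \<otimes> h)) E = compose E (restrict (f g) E) (restrict (f h) E)"
    if "g \<in> carrier G" "h \<in> carrier G" for g h
    using that by (auto simp: compose_def mult closed)
  then have "(\<lambda>g. restrict (f g) E) \<in> hom G (BijGroup E)"
    by (auto simp: hom_def BijGroup_def Bij)
  then show ?thesis
    by (simp add: group_action_def group_hom_def group_hom_axioms_def group_BijGroup)
qed

lemma (in simple_group) group_action_trivial_if_fact_less_order:
  assumes "group_action G E \<phi>" and "finite E" and "fact (card E) < order G"
    and "g \<in> carrier G" and "e \<in> E"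
  shows "\<phi> g e = e"
proof -
  interpret group_hom G "BijGroup E" \<phi>
    using assms(1) by (simp add: group_action_def)
  have "kernel G (BijGroup E) \<phi> \<noteq> {\<one>}"
  proof
    assume "kernel G (BijGroup E) \<phi> = {\<one>}"
    then have "inj_on \<phi> (carrier G)"
      by (rule trivial_ker_imp_inj)
    moreover have "\<phi> ` carrier G \<subseteq> Bij E"
      using hom_closed by (auto simp: BijGroup_def)
    moreover have "finite (Bij E)"
      using card_Bij[OF assms(2)] card.infinite by fastforce
    ultimately have "order G \<le> card (Bij E)"
      unfolding order_def by (metis card_inj_on_le)
    then show False
      using assms(2,3) by (simp add: card_Bij)
  qed
  then have "g \<in> kernel G (BijGroup E) \<phi>"
    using no_real_normal_subgroup[OF normal_kernel] assms(4) by blast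
  then show ?thesis
    using assms(5) by (simp add: kernel_def BijGroup_def)
qed

section \<open>Conjugation of darts\<close>

lemma iota_iota [simp]: "iota (iota d) = d"
  by (simp add: iota_def)

lemma iota_tri: "d \<in> tri G \<Longrightarrow> iota d \<in> tri G"
  by (auto simp: tri_def iota_def)

lemma conj_dart_iota: "conj_dart G g (iota d) = iota (conj_dart G g d)"
  by (simp add: conj_dart_def iota_def)

context group
begin

lemma inv_mult_cancel_left [simp]: "x \<in> carrier G \<Longrightarrow> y \<in> carrier G \<Longrightarrow> inv x \<otimes> (x \<otimes> y) = y"
  by (simp add: m_assoc[symmetric])

lemma mult_inv_cancel_left [simp]: "x \<in> carrier G \<Longrightarrow> y \<in> carrier G \<Longrightarrow> x \<otimes> (inv x \<otimes> y) = y"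
  by (simp add: m_assoc[symmetric])

lemma tri_subset: "tri G \<subseteq> carrier G \<times> carrier G"
  by (auto simp: tri_def)

lemma conj_dart_closed:
  "g \<in> carrier G \<Longrightarrow> d \<in> carrier G \<times> carrier G \<Longrightarrow> conj_dart G g d \<in> carrier G \<times> carrier G"
  by (auto simp: conj_dart_def)

lemma conj_dart_mult:
  "g \<in> carrier G \<Longrightarrow> h \<in> carrier G \<Longrightarrow> d \<in> carrier G \<times> carrier G \<Longrightarrow>
    conj_dart G (g \<otimes> h) d = conj_dart G g (conj_dart G h d)"
  by (auto simp: conj_dart_def m_assoc inv_mult_group)

lemma conj_dart_one: "d \<in> carrier G \<times> carrier G \<Longrightarrow> conj_dart G \<one> d = d"
  by (auto simp: conj_dart_def)

lemma conj_dart_inv_cancel_left: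
  "g \<in> carrier G \<Longrightarrow> d \<in> carrier G \<times> carrier G \<Longrightarrow> conj_dart G (inv g) (conj_dart G g d) = d"
  by (simp add: conj_dart_mult[symmetric] conj_dart_one)

lemma conj_dart_eq_self_iff:
  assumes "g \<in> carrier G" and "a \<in> carrier G" and "b \<in> carrier G"
  shows "conj_dart G g (a, b) = (a, b) \<longleftrightarrow> g \<in> centr G a \<inter> centr G b"
proof -
  have "g \<otimes> c \<otimes> inv g = c \<longleftrightarrow> g \<otimes> c = c \<otimes> g" if "c \<in> carrier G" for c
    using assms(1) that by (metis inv_solve_right m_closed)
  then show ?thesis
    using assms by (simp add: conj_dart_def centr_def)
qed

lemma conj_dart_tri: "g \<in> carrier G \<Longrightarrow> d \<in> tri G \<Longrightarrow> conj_dart G g d \<in> tri G"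
proof -
  assume g: "g \<in> carrier G" and "d \<in> tri G"
  then obtain a b where d: "d = (a, b)" "a \<in> carrier G" "b \<in> carrier G" "a \<otimes> b \<noteq> b \<otimes> a"
    by (auto simp: tri_def)
  have conj_prod: "(g \<otimes> u \<otimes> inv g) \<otimes> (g \<otimes> v \<otimes> inv g) = g \<otimes> (u \<otimes> v) \<otimes> inv g"
    if "u \<in> carrier G" "v \<in> carrier G" for u v
    using g that by (metis inv_closed l_inv l_one m_assoc m_closed)
  have "g \<otimes> (a \<otimes> b) \<otimes> inv g \<noteq> g \<otimes> (b \<otimes> a) \<otimes> inv g"
    using g d by (metis inv_closed l_cancel m_closed r_cancel)
  then show ?thesis
    using g d by (simp add: tri_def conj_dart_def conj_prod)
qed

lemma conj_dart_inv_cancel_right: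
  "g \<in> carrier G \<Longrightarrow> d \<in> carrier G \<times> carrier G \<Longrightarrow> conj_dart G g (conj_dart G (inv g) d) = d"
  by (simp add: conj_dart_mult[symmetric] conj_dart_one)

lemma sigma_eq_conj_dart: "d \<in> carrier G \<times> carrier G \<Longrightarrow> sigma G d = conj_dart G (fst d) d"
  by (auto simp: sigma_def conj_dart_def m_assoc)

lemma phi_eq_conj_dart:
  "d \<in> carrier G \<times> carrier G \<Longrightarrow> phi G d = conj_dart G (inv (snd d)) (iota d)"
  by (auto simp: phi_def conj_dart_def iota_def m_assoc)

lemma sigma_tri:
  assumes "d \<in> tri G"
  shows "sigma G d \<in> tri G"
proof -
  have "d \<in> carrier G \<times> carrier G"
    using assms tri_subset by blast
  then show ?thesis
    using conj_dart_tri[OF _ assms] by (simp add: sigma_eq_conj_dart mem_Times_iff)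
qed

lemma phi_tri:
  assumes "d \<in> tri G"
  shows "phi G d \<in> tri G"
proof -
  have "d \<in> carrier G \<times> carrier G"
    using assms tri_subset by blast
  then show ?thesis
    using conj_dart_tri[OF _ iota_tri[OF assms]] by (simp add: phi_eq_conj_dart mem_Times_iff)
qed

lemma sigma_phi: "d \<in> carrier G \<times> carrier G \<Longrightarrow> sigma G (phi G d) = iota d"
  by (auto simp: sigma_def phi_def iota_def m_assoc)

lemma inj_on_sigma: "inj_on (sigma G) (carrier G \<times> carrier G)"
  by (rule inj_on_inverseI[where g = "\<lambda>d. conj_dart G (inv (fst d)) d"])
    (auto simp: sigma_def conj_dart_def m_assoc)

lemma conj_dart_sigma:
  assumes g: "g \<in> carrier G" and d: "d \<in> carrier G \<times> carrier G"
  shows "conj_dart G g (sigma G d) = sigma G (conj_dart G g d)"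
proof -
  have gd: "conj_dart G g d \<in> carrier G \<times> carrier G"
    using g d by (rule conj_dart_closed)
  have "conj_dart G g (sigma G d) = conj_dart G (g \<otimes> fst d) d"
    using g d by (simp add: sigma_eq_conj_dart conj_dart_mult mem_Times_iff)
  also have "g \<otimes> fst d = fst (conj_dart G g d) \<otimes> g"
    using g d by (auto simp: conj_dart_def m_assoc)
  also have "conj_dart G (fst (conj_dart G g d) \<otimes> g) d = sigma G (conj_dart G g d)"
    using g d gd by (simp add: sigma_eq_conj_dart conj_dart_mult mem_Times_iff)
  finally show ?thesis .
qed

lemma conj_dart_phi:
  assumes g: "g \<in> carrier G" and d: "d \<in> carrier G \<times> carrier G"
  shows "conj_dart G g (phi G d) = phi G (conj_dart G g d)"
proof -
  have gd: "conj_dart G g d \<in> carrier G \<times> carrier G"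
    using g d by (rule conj_dart_closed)
  have id: "iota d \<in> carrier G \<times> carrier G"
    using d by (auto simp: iota_def)
  have "conj_dart G g (phi G d) = conj_dart G (g \<otimes> inv (snd d)) (iota d)"
    using g d id by (simp add: phi_eq_conj_dart conj_dart_mult mem_Times_iff)
  also have "g \<otimes> inv (snd d) = inv (snd (conj_dart G g d)) \<otimes> g"
    using g d by (auto simp: conj_dart_def m_assoc inv_mult_group)
  also have "conj_dart G (inv (snd (conj_dart G g d)) \<otimes> g) (iota d) = phi G (conj_dart G g d)"
    using g d gd id by (simp add: phi_eq_conj_dart conj_dart_mult conj_dart_iota mem_Times_iff)
  finally show ?thesis .
qed

lemma phi_iota_sigma: "d \<in> carrier G \<times> carrier G \<Longrightarrow> phi G (iota (sigma G d)) = d"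
  by (auto simp: phi_def sigma_def iota_def m_assoc)

end

section \<open>Components\<close>

context group
begin

lemma adj_converseD:
  assumes "(e, d) \<in> adj G"
  shows "e = iota d \<or> e = iota (sigma G d) \<or> e = phi G d"
proof -
  have e: "e \<in> carrier G \<times> carrier G"
    using assms tri_subset by (auto simp: adj_def)
  from assms have "d = iota e \<or> d = phi G e \<or> d = iota (sigma G e)"
    by (simp add: adj_def)
  then show ?thesis
    using e sigma_phi[OF e] phi_iota_sigma[OF e] by auto
qed

lemma components_subset_tri: "S \<in> components G \<Longrightarrow> S \<subseteq> tri G"
proof
  fix e assume "S \<in> components G" and "e \<in> S"
  then obtain d where d: "d \<in> tri G" and path: "(d, e) \<in> (adj G \<union> (adj G)\<inverse>)\<^sup>*"
    by (auto simp: components_def comp_of_def)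
  from path show "e \<in> tri G" using d
    by (induction rule: rtrancl_induct) (auto simp: adj_def)
qed

lemma component_eq_comp_of:
  assumes "S \<in> components G" and "d \<in> S"
  shows "S = comp_of G d"
proof -
  let ?R = "adj G \<union> (adj G)\<inverse>"
  obtain d0 where S: "S = comp_of G d0"
    using assms(1) by (auto simp: components_def)
  have d0_d: "(d0, d) \<in> ?R\<^sup>*"
    using assms(2) S by (simp add: comp_of_def)
  then have d_d0: "(d, d0) \<in> ?R\<^sup>*"
    by (rule symD[OF sym_rtrancl[OF sym_Un_converse]])
  have "(d0, e) \<in> ?R\<^sup>* \<longleftrightarrow> (d, e) \<in> ?R\<^sup>*" for e
    using rtrancl_trans[OF d0_d] rtrancl_trans[OF d_d0] by blast
  then show ?thesis
    by (simp add: S comp_of_def)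
qed

lemma component_closed:
  assumes S: "S \<in> components G" and d: "d \<in> S"
  shows "iota d \<in> S" and "sigma G d \<in> S" and "phi G d \<in> S"
proof -
  have dt: "d \<in> tri G"
    using components_subset_tri[OF S] d by blast
  have step: "e \<in> S" if "(d, e) \<in> adj G" for e
    using that component_eq_comp_of[OF S d] by (auto simp: comp_of_def)
  show "iota d \<in> S" and "phi G d \<in> S"
    using dt by (auto intro!: step simp: adj_def iota_tri phi_tri)
  have iota_sigma: "iota (sigma G d) \<in> S"
    using dt by (auto intro!: step simp: adj_def iota_tri sigma_tri)
  have "(iota (sigma G d), sigma G d) \<in> adj G"
    using dt by (simp add: adj_def iota_tri sigma_tri)
  then show "sigma G d \<in> S"
    using component_eq_comp_of[OF S iota_sigma] by (auto simp: comp_of_def)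
qed

lemma component_induct [consumes 3, case_names base iota sigma phi]:
  assumes S: "S \<in> components G" and "d0 \<in> S" and "e \<in> S" and "P d0"
    and iota: "\<And>d. d \<in> S \<Longrightarrow> P d \<Longrightarrow> P (iota d)"
    and sigma: "\<And>d. d \<in> S \<Longrightarrow> P d \<Longrightarrow> P (sigma G d)"
    and phi: "\<And>d. d \<in> S \<Longrightarrow> P d \<Longrightarrow> P (phi G d)"
  shows "P e"
proof -
  have "(d0, e) \<in> (adj G \<union> (adj G)\<inverse>)\<^sup>*"
    using assms(2,3) component_eq_comp_of[OF S assms(2)] by (simp add: comp_of_def)
  then have "e \<in> S \<and> P e"
  proof (induction rule: rtrancl_induct)
    case base
    show ?case using assms(2,4) by simp
  next
    case (step d e)
    from step.hyps(2) have "(d, e) \<in> adj G \<or> (e, d) \<in> adj G"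
      by blast
    then have "e = iota d \<or> e = phi G d \<or> e = iota (sigma G d)"
      using adj_converseD[of e d] by (auto simp: adj_def)
    then show ?case
      using step.IH component_closed[OF S] iota sigma phi by (elim disjE) blast+
  qed
  then show ?thesis ..
qed

lemma conj_dart_image_subset_component:
  assumes S: "S \<in> components G" and d0: "d0 \<in> S" and g: "g \<in> carrier G"
  shows "conj_dart G g ` S \<subseteq> comp_of G (conj_dart G g d0)"
proof -
  have S_carrier: "\<And>d. d \<in> S \<Longrightarrow> d \<in> carrier G \<times> carrier G"
    using components_subset_tri[OF S] tri_subset by blast
  let ?T = "comp_of G (conj_dart G g d0)"
  have T: "?T \<in> components G"
    using components_subset_tri[OF S] d0 g by (auto simp: components_def intro: conj_dart_tri)
  have "conj_dart G g e \<in> ?T" if "e \<in> S" for e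
    using S d0 that
  proof (induction rule: component_induct)
    case base
    show ?case
      by (simp add: comp_of_def)
  qed (use S_carrier g component_closed[OF T] in \<open>simp_all add: conj_dart_iota conj_dart_sigma conj_dart_phi\<close>)
  then show ?thesis by blast
qed

lemma conj_dart_component:
  assumes S: "S \<in> components G" and g: "g \<in> carrier G"
  shows "conj_dart G g ` S \<in> components G"
proof -
  obtain d0 where d0: "d0 \<in> tri G" and S_eq: "S = comp_of G d0"
    using S by (auto simp: components_def)
  have d0S: "d0 \<in> S"
    using S_eq by (simp add: comp_of_def)
  let ?T = "comp_of G (conj_dart G g d0)"
  have T: "?T \<in> components G"
    using d0 g by (auto simp: components_def intro: conj_dart_tri)
  have cd0: "conj_dart G g d0 \<in> ?T"
    by (simp add: comp_of_def)
  have "conj_dart G (inv g) (conj_dart G g d0) = d0"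
    using d0 g tri_subset by (blast intro: conj_dart_inv_cancel_left)
  then have "conj_dart G (inv g) ` ?T \<subseteq> S"
    using conj_dart_image_subset_component[OF T cd0, of "inv g"] g S_eq by simp
  then have "conj_dart G g ` conj_dart G (inv g) ` ?T \<subseteq> conj_dart G g ` S"
    by (rule image_mono)
  moreover have "conj_dart G g ` conj_dart G (inv g) ` ?T = ?T"
  proof -
    have "conj_dart G g (conj_dart G (inv g) e) = e" if "e \<in> ?T" for e
      using that components_subset_tri[OF T] tri_subset g
      by (blast intro: conj_dart_inv_cancel_right)
    then show ?thesis
      by (simp add: image_image)
  qed
  ultimately have "conj_dart G g ` S = ?T"
    using conj_dart_image_subset_component[OF S d0S g] by blast
  then show ?thesis
    using T by simp
qed

end

section \<open>The stabiliser of a component\<close>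

context group
begin

lemma conj_dart_cell_iso:
  assumes S: "S \<in> components G" and T: "T \<in> components G" and iso: "cell_iso G S T"
    and g: "g \<in> carrier G"
  shows "cell_iso G S (conj_dart G g ` T)"
proof -
  obtain \<psi> where bij: "bij_betw \<psi> S T" and \<psi>_iota: "\<forall>d\<in>S. \<psi> (iota d) = iota (\<psi> d)"
    and \<psi>_sigma: "(\<forall>d\<in>S. \<psi> (sigma G d) = sigma G (\<psi> d)) \<or> (\<forall>d\<in>S. sigma G (\<psi> (sigma G d)) = \<psi> d)"
    using iso unfolding cell_iso_def by blast
  have \<psi>_carrier: "\<psi> d \<in> carrier G \<times> carrier G" if "d \<in> S" for d
    using that bij components_subset_tri[OF T] tri_subset by (auto simp: bij_betw_def)
  have "inj_on (conj_dart G g) T"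
    using components_subset_tri[OF T] tri_subset g
    by (intro inj_on_inverseI[where g = "conj_dart G (inv g)"]) (auto intro: conj_dart_inv_cancel_left)
  then have "bij_betw (conj_dart G g) T (conj_dart G g ` T)"
    by (simp add: bij_betw_def)
  then have "bij_betw (conj_dart G g \<circ> \<psi>) S (conj_dart G g ` T)"
    using bij by (simp add: bij_betw_trans)
  moreover have "\<forall>d\<in>S. (conj_dart G g \<circ> \<psi>) (iota d) = iota ((conj_dart G g \<circ> \<psi>) d)"
    using \<psi>_iota by (simp add: conj_dart_iota)
  moreover have "(\<forall>d\<in>S. (conj_dart G g \<circ> \<psi>) (sigma G d) = sigma G ((conj_dart G g \<circ> \<psi>) d)) \<or>
      (\<forall>d\<in>S. sigma G ((conj_dart G g \<circ> \<psi>) (sigma G d)) = (conj_dart G g \<circ> \<psi>) d)"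
    using \<psi>_sigma g \<psi>_carrier component_closed(2)[OF S]
    by (auto simp: conj_dart_sigma[symmetric])
  ultimately show ?thesis
    unfolding cell_iso_def by blast
qed

end

lemma (in simple_group) stab_eq_carrier:
  assumes S: "S \<in> components G"
    and small: "fact (card {S' \<in> components G. cell_iso G S S'}) < order G"
  shows "stab G S = carrier G"
proof -
  define C where "C = {S' \<in> components G. cell_iso G S S'}"
  have C_carrier: "T \<subseteq> carrier G \<times> carrier G" if "T \<in> C" for T
    using that components_subset_tri tri_subset by (auto simp: C_def)
  have action: "group_action G C (\<lambda>g. restrict (\<lambda>T. conj_dart G g ` T) C)"
  proof (rule group_actionI)
    show "conj_dart G g ` T \<in> C" if "g \<in> carrier G" "T \<in> C" for g T
      using that S by (simp add: C_def conj_dart_component conj_dart_cell_iso)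
    show "conj_dart G (g \<otimes> h) ` T = conj_dart G g ` conj_dart G h ` T"
      if "g \<in> carrier G" "h \<in> carrier G" "T \<in> C" for g h T
      using that C_carrier[of T] by (force simp: image_image conj_dart_mult)
    show "conj_dart G \<one> ` T = T" if "T \<in> C" for T
      using C_carrier[OF that] by (force simp: conj_dart_one)
  qed
  have finite_C: "finite C"
  proof -
    have "finite (carrier G)"
      using small order_gt_0_iff_finite by (metis gr_zeroI not_less_zero)
    then have "finite (Pow (tri G))"
      using tri_subset by (auto intro: finite_subset)
    moreover have "C \<subseteq> Pow (tri G)"
      using components_subset_tri by (auto simp: C_def)
    ultimately show ?thesis
      by (rule finite_subset[rotated])
  qed
  have "S \<in> C"
    using S by (auto simp: C_def cell_iso_def intro!: exI[of _ id])
  then have "conj_dart G g ` S = S" if "g \<in> carrier G" for g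
    using group_action_trivial_if_fact_less_order[OF action finite_C _ that] small by (simp add: C_def)
  then show ?thesis
    by (auto simp: stab_def)
qed

section \<open>Centralisers and automorphisms\<close>

context group
begin

lemma group_action_conj_dart:
  assumes "E \<subseteq> carrier G \<times> carrier G" and "\<And>g. g \<in> carrier G \<Longrightarrow> conj_dart G g ` E \<subseteq> E"
  shows "group_action G E (\<lambda>g. restrict (conj_dart G g) E)"
  by (rule group_actionI) (use assms in \<open>auto simp: conj_dart_mult conj_dart_one\<close>)

lemma conj_dart_fixes_component:
  assumes S: "S \<in> components G" and d0: "d0 \<in> S" and h: "h \<in> carrier G"
    and fixed: "conj_dart G h d0 = d0" and d: "d \<in> S"
  shows "conj_dart G h d = d"
proof -
  have "\<And>e. e \<in> S \<Longrightarrow> e \<in> carrier G \<times> carrier G"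
    using components_subset_tri[OF S] tri_subset by blast
  with S d0 d fixed h show ?thesis
    by (induction rule: component_induct) (simp_all add: conj_dart_iota conj_dart_sigma conj_dart_phi)
qed

lemma kernel_conj_dart_component:
  assumes S: "S \<in> components G" and xy: "(x, y) \<in> S"
  shows "kernel G (BijGroup S) (\<lambda>g. restrict (conj_dart G g) S) = centr G x \<inter> centr G y"
proof -
  have xy_carrier: "x \<in> carrier G" "y \<in> carrier G"
    using xy components_subset_tri[OF S] tri_subset by auto
  have "g \<in> kernel G (BijGroup S) (\<lambda>g. restrict (conj_dart G g) S) \<longleftrightarrow> g \<in> centr G x \<inter> centr G y"
    for g
  proof (cases "g \<in> carrier G")
    case True
    have "restrict (conj_dart G g) S = (\<lambda>d\<in>S. d) \<longleftrightarrow> (\<forall>d\<in>S. conj_dart G g d = d)"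
      by (auto simp: fun_eq_iff restrict_def)
    also have "\<dots> \<longleftrightarrow> conj_dart G g (x, y) = (x, y)"
      using conj_dart_fixes_component[OF S xy True] xy by blast
    finally show ?thesis
      using conj_dart_eq_self_iff[OF True xy_carrier] by (simp add: kernel_def BijGroup_def True)
  next
    case False
    then show ?thesis
      by (simp add: kernel_def centr_def)
  qed
  then show ?thesis
    by blast
qed

end

lemma (in simple_group) centr_inter_centr_eq_one:
  assumes S: "S \<in> components G" and xy: "(x, y) \<in> S" and stab: "stab G S = carrier G"
  shows "centr G x \<inter> centr G y = {\<one>}"
proof -
  have "conj_dart G g ` S \<subseteq> S" if "g \<in> carrier G" for g
    using stab that unfolding stab_def by blast
  then have "group_action G S (\<lambda>g. restrict (conj_dart G g) S)"
    using components_subset_tri[OF S] tri_subset by (intro group_action_conj_dart) auto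
  then have "kernel G (BijGroup S) (\<lambda>g. restrict (conj_dart G g) S) \<lhd> G"
    by (rule group_hom.normal_kernel[OF group_action.group_hom])
  then have normal: "centr G x \<inter> centr G y \<lhd> G"
    by (simp add: kernel_conj_dart_component[OF S xy])
  have "x \<in> carrier G - centr G y"
    using xy components_subset_tri[OF S] by (auto simp: tri_def centr_def)
  then have "centr G x \<inter> centr G y \<noteq> carrier G"
    by blast
  then show ?thesis
    using no_real_normal_subgroup[OF normal] by blast
qed

lemma (in group) r_coset_one_iso_Mod_one: "(\<lambda>g. {\<one>} #> g) \<in> iso G (G Mod {\<one>})"
proof -
  have singleton: "{\<one>} #> g = {g}" if "g \<in> carrier G" for g
    using that by (simp add: r_coset_def)
  have "bij_betw (\<lambda>g. {\<one>} #> g) (carrier G) (carrier (G Mod {\<one>}))"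
    unfolding carrier_FactGroup bij_betw_def inj_on_def by (simp add: singleton)
  then show ?thesis
    using normal.r_coset_hom_Mod[OF one_is_normal] by (simp add: iso_def)
qed

context group
begin

lemma valency_aut_plus:
  assumes S: "S \<in> components G" and \<psi>: "\<psi> \<in> aut_plus G S" and d: "d \<in> S"
  shows "valency G (\<psi> d) = valency G d"
proof -
  have orbit: "(sigma G ^^ n) d \<in> S" for n
    by (induction n) (use d component_closed(2)[OF S] in auto)
  have commute: "\<psi> ((sigma G ^^ n) d) = (sigma G ^^ n) (\<psi> d)" for n
    by (induction n) (use \<psi> orbit in \<open>auto simp: aut_plus_def\<close>)
  have "{(sigma G ^^ n) (\<psi> d) | n. True} = \<psi> ` {(sigma G ^^ n) d | n. True}"
    by (auto simp: commute[symmetric])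
  moreover have "inj_on \<psi> {(sigma G ^^ n) d | n. True}"
    using \<psi> orbit by (auto simp: aut_plus_def bij_betw_def intro: inj_on_subset)
  ultimately show ?thesis
    unfolding valency_def by (simp add: card_image)
qed

lemma aut_plus_eqI:
  assumes S: "S \<in> components G" and d0: "d0 \<in> S"
    and \<psi>: "\<psi> \<in> aut_plus G S" and \<phi>: "\<phi> \<in> aut_plus G S" and agree: "\<psi> d0 = \<phi> d0"
  shows "\<psi> = \<phi>"
proof (rule extensionalityI[of _ S])
  have S_carrier: "\<And>d. d \<in> S \<Longrightarrow> d \<in> carrier G \<times> carrier G"
    using components_subset_tri[OF S] tri_subset by blast
  have maps: "\<And>d. d \<in> S \<Longrightarrow> \<psi> d \<in> S \<and> \<phi> d \<in> S"
    using \<psi> \<phi> by (auto simp: aut_plus_def bij_betw_def)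
  show "\<psi> d = \<phi> d" if "d \<in> S" for d
    using S d0 that agree
  proof (induction rule: component_induct)
    case (iota d)
    then show ?case using \<psi> \<phi> by (simp add: aut_plus_def)
  next
    case (sigma d)
    then show ?case using \<psi> \<phi> by (simp add: aut_plus_def)
  next
    case (phi d)
    have "sigma G (\<chi> (phi G d)) = \<chi> (iota d)" if "\<chi> \<in> aut_plus G S" for \<chi>
    proof -
      have "sigma G (\<chi> (phi G d)) = \<chi> (sigma G (phi G d))"
        using that component_closed(3)[OF S phi(1)] by (simp add: aut_plus_def)
      then show ?thesis
        using sigma_phi[OF S_carrier[OF phi(1)]] by simp
    qed
    moreover have "\<psi> (iota d) = \<phi> (iota d)"
      using phi \<psi> \<phi> by (simp add: aut_plus_def)
    ultimately have "sigma G (\<psi> (phi G d)) = sigma G (\<phi> (phi G d))"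
      using \<psi> \<phi> by simp
    then show ?case
      by (rule inj_onD[OF inj_on_sigma])
        (use maps[OF component_closed(3)[OF S phi(1)]] S_carrier in blast)+
  qed
qed (use \<psi> \<phi> in \<open>auto simp: aut_plus_def\<close>)

lemma restrict_conj_dart_aut_plus:
  assumes S: "S \<in> components G" and g: "g \<in> carrier G" and inv: "conj_dart G g ` S = S"
  shows "restrict (conj_dart G g) S \<in> aut_plus G S"
proof -
  have S_carrier: "\<And>d. d \<in> S \<Longrightarrow> d \<in> carrier G \<times> carrier G"
    using components_subset_tri[OF S] tri_subset by blast
  have "inj_on (conj_dart G g) S"
    using S_carrier g
    by (intro inj_on_inverseI[where g = "conj_dart G (inv g)"]) (auto intro: conj_dart_inv_cancel_left)
  then have "bij_betw (conj_dart G g) S S"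
    using inv by (simp add: bij_betw_def)
  then show ?thesis
    using S_carrier g component_closed[OF S]
    by (simp add: aut_plus_def conj_dart_iota conj_dart_sigma)
qed

lemma component_dart_conj_cases:
  assumes S: "S \<in> components G" and xy: "(x, y) \<in> S" and d: "d \<in> S"
  shows "\<exists>g\<in>carrier G. \<exists>p\<in>{(x, y), (y, x)}. d = conj_dart G g p"
proof -
  have S_carrier: "\<And>d. d \<in> S \<Longrightarrow> d \<in> carrier G \<times> carrier G"
    using components_subset_tri[OF S] tri_subset by blast
  have p_carrier: "p \<in> carrier G \<times> carrier G" if "p \<in> {(x, y), (y, x)}" for p
    using that S_carrier[OF xy] by auto
  from S xy d show ?thesis
  proof (induction rule: component_induct)
    case base
    show ?case
      using S_carrier[OF xy] by (intro bexI[of _ \<one>]) (auto simp: conj_dart_one)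
  next
    case (iota d)
    then obtain g p where "g \<in> carrier G" "p \<in> {(x, y), (y, x)}" "d = conj_dart G g p"
      by blast
    moreover have "iota p \<in> {(x, y), (y, x)}"
      using \<open>p \<in> {(x, y), (y, x)}\<close> by (auto simp: iota_def)
    ultimately show ?case
      by (metis conj_dart_iota)
  next
    case (sigma d)
    then obtain g p where g: "g \<in> carrier G" and p: "p \<in> {(x, y), (y, x)}" and dp: "d = conj_dart G g p"
      by blast
    have "fst d \<in> carrier G"
      using S_carrier[OF sigma(1)] by auto
    then have "sigma G d = conj_dart G (fst d \<otimes> g) p"
      using sigma_eq_conj_dart[OF S_carrier[OF sigma(1)]] conj_dart_mult[OF _ g p_carrier[OF p]] dp
      by metis
    then show ?case
      using g p \<open>fst d \<in> carrier G\<close> by blast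
  next
    case (phi d)
    then obtain g p where g: "g \<in> carrier G" and p: "p \<in> {(x, y), (y, x)}" and dp: "d = conj_dart G g p"
      by blast
    have "inv (snd d) \<in> carrier G"
      using S_carrier[OF phi(1)] by auto
    moreover have "iota p \<in> {(x, y), (y, x)}"
      using p by (auto simp: iota_def)
    moreover have "iota d = conj_dart G g (iota p)"
      using dp by (simp add: conj_dart_iota)
    ultimately have "phi G d = conj_dart G (inv (snd d) \<otimes> g) (iota p)"
      using phi_eq_conj_dart[OF S_carrier[OF phi(1)]] conj_dart_mult[OF _ g p_carrier] by metis
    then show ?case
      using g \<open>inv (snd d) \<in> carrier G\<close> \<open>iota p \<in> {(x, y), (y, x)}\<close> by blast
  qed
qed

lemma aut_plus_is_conj_dart:
  assumes S: "S \<in> components G" and xy: "(x, y) \<in> S"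
    and invariant: "\<And>g. g \<in> carrier G \<Longrightarrow> conj_dart G g ` S = S"
    and valency: "valency G (x, y) \<noteq> valency G (y, x)"
    and \<psi>: "\<psi> \<in> aut_plus G S"
  shows "\<exists>g\<in>carrier G. \<psi> = restrict (conj_dart G g) S"
proof -
  have "\<psi> (x, y) \<in> S"
    using \<psi> xy by (auto simp: aut_plus_def bij_betw_def)
  then obtain g p where g: "g \<in> carrier G" and p: "p \<in> {(x, y), (y, x)}"
    and \<psi>_xy: "\<psi> (x, y) = conj_dart G g p"
    using component_dart_conj_cases[OF S xy] by blast
  let ?\<chi> = "restrict (conj_dart G g) S"
  have \<chi>: "?\<chi> \<in> aut_plus G S"
    using restrict_conj_dart_aut_plus[OF S g invariant[OF g]] .
  have yx: "(y, x) \<in> S"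
    using component_closed(1)[OF S xy] by (simp add: iota_def)
  have "p \<noteq> (y, x)"
  proof
    assume "p = (y, x)"
    then have "valency G (x, y) = valency G (?\<chi> (y, x))"
      using valency_aut_plus[OF S \<psi> xy] \<psi>_xy yx by simp
    also have "\<dots> = valency G (y, x)"
      using valency_aut_plus[OF S \<chi> yx] .
    finally show False
      using valency by simp
  qed
  then have "\<psi> (x, y) = ?\<chi> (x, y)"
    using p \<psi>_xy xy by simp
  then show ?thesis
    using aut_plus_eqI[OF S xy \<psi> \<chi>] g by blast
qed

lemma bij_betw_conj_dart_aut_plus:
  assumes S: "S \<in> components G" and xy: "(x, y) \<in> S" and stab: "stab G S = carrier G"
    and trivial: "centr G x \<inter> centr G y = {\<one>}"
    and valency: "valency G (x, y) \<noteq> valency G (y, x)"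
  shows "bij_betw (\<lambda>g. restrict (conj_dart G g) S) (carrier G) (aut_plus G S)"
proof -
  have invariant: "conj_dart G g ` S = S" if "g \<in> carrier G" for g
    using stab that unfolding stab_def by blast
  then have "group_action G S (\<lambda>g. restrict (conj_dart G g) S)"
    using components_subset_tri[OF S] tri_subset by (intro group_action_conj_dart) auto
  then have "inj_on (\<lambda>g. restrict (conj_dart G g) S) (carrier G)"
    by (rule group_hom.trivial_ker_imp_inj[OF group_action.group_hom])
      (simp add: kernel_conj_dart_component[OF S xy] trivial)
  moreover have "(\<lambda>g. restrict (conj_dart G g) S) ` carrier G = aut_plus G S"
    using restrict_conj_dart_aut_plus[OF S _ invariant] aut_plus_is_conj_dart[OF S xy invariant valency]
    by blast
  ultimately show ?thesis
    by (simp add: bij_betw_def)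
qed

end

theorem lemma3p6:
  fixes G :: "('a, 'b) monoid_scheme" and S :: "('a \<times> 'a) set" and x y :: 'a and k :: nat
  assumes "simple_group G" and "finite (carrier G)" and "\<not> comm_group G"
    and "S \<in> components G" and "(x, y) \<in> S"
    and "k = card {S' \<in> components G. cell_iso G S S'}"
    and "fact k < order G"
  shows "stab G S = carrier G \<and>
         (\<lambda>g. (centr G x \<inter> centr G y) #>\<^bsub>G\<^esub> g) \<in> iso G (Qbar G S x y) \<and>
         (valency G (x, y) \<noteq> valency G (y, x) \<longrightarrow>
         bij_betw (\<lambda>g. restrict (conj_dart G g) S) (carrier G) (aut_plus G S))"
proof -
  interpret simple_group G by fact
  have stab: "stab G S = carrier G"
    using stab_eq_carrier assms(4,6,7) by simp
  have trivial: "centr G x \<inter> centr G y = {\<one>\<^bsub>G\<^esub>}"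
    using centr_inter_centr_eq_one[OF assms(4,5) stab] .
  have "Qbar G S x y = G Mod {\<one>\<^bsub>G\<^esub>}"
    unfolding Qbar_def stab trivial by simp
  then show ?thesis
    using stab trivial r_coset_one_iso_Mod_one bij_betw_conj_dart_aut_plus[OF assms(4,5) stab trivial]
    by simp
qed

end
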